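(* If $q$ is an integer with $q\equiv 1\pmod 4$ and $q\neq 1$, then $A_q(q+3,q+1)\le \tfrac12 q^2(q+1)-q=\tfrac12(q-1)q(q+2)$.
   Context: For an integer $q\ge2$ let $[q]=\{0,1,\dots,q-1\}$. For words $u,v\in[q]^n$, the Hamming distance $d_H(u,v)$ is the number of coordinates $i$ with $u_i\neq v_i$. The minimum distance of a code $C\subseteq[q]^n$ is the minimum Hamming distance between distinct codewords ($\infty$ if $|C|\le 1$). $A_q(n,d)$ is the maximum cardinality of a code $C\subseteq[q]^n$ with minimum distance at least $d$. *)

theory Defs
  imports Complex_Main
begin

definition words :: "nat \<Rightarrow> nat \<Rightarrow> nat list set" where
  "words q n = {w. length w = n \<and> (\<forall>i<n. w ! i < q)}"

definition hamming :: "nat list \<Rightarrow> nat list \<Rightarrow> nat" where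
  "hamming u v = card {i. i < length u \<and> u ! i \<noteq> v ! i}"

definition min_dist_ge :: "nat list set \<Rightarrow> nat \<Rightarrow> bool" where
  "min_dist_ge C d = (\<forall>u\<in>C. \<forall>v\<in>C. u \<noteq> v \<longrightarrow> d \<le> hamming u v)"

definition A :: "nat \<Rightarrow> nat \<Rightarrow> nat \<Rightarrow> nat" where
  "A q n d = Max {card C | C. C \<subseteq> words q n \<and> min_dist_ge C d}"

end

theory Submission
  imports Defs
begin

text \<open>
  Write \<open>q = 2k - 1\<close>; distinct codewords agree in at most two of the \<open>q + 3\<close> coordinates.
  For \<open>m\<close> codewords sharing the symbol in one coordinate, counting agreeing pairs column by
  column relates the number of pairs agreeing exactly once, a sum of the nonnegative terms
  \<open>(c - t)(c - t - 1)\<close> over the symbol counts \<open>c\<close> of the other columns, and a quadratic in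
  \<open>m\<close>. Taking \<open>t = k\<close> shows that no symbol occurs more than \<open>qk\<close> times in a coordinate, and
  that in a class of exactly \<open>qk\<close> codewords every symbol occurs exactly \<open>k\<close> times in every
  other coordinate; taking \<open>t = k - 1\<close> bounds the once-agreeing pairs inside such a class
  by \<open>d(d - 1)\<close>, \<open>d\<close> its deficit from \<open>qk\<close>.
  If the code had more than \<open>q\<^sup>2k - q\<close> words, the deficits of each column would sum to some
  \<open>s < q\<close>, so some class is full. Since \<open>k\<close> is odd, a parity count shows that every codeword
  outside a full class agrees exactly once with a member of it, giving at least
  \<open>2(|C| - qk)\<close> once-agreeing pairs, whereas the class bounds allow at most
  \<open>(q + 3)s(s - 1)\<close> of them.
\<close>

definition agreements :: "nat \<Rightarrow> nat list \<Rightarrow> nat list \<Rightarrow> nat" where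
  "agreements n u v = card {i. i < n \<and> u ! i = v ! i}"

definition symbol_count :: "nat list set \<Rightarrow> nat \<Rightarrow> nat \<Rightarrow> nat" where
  "symbol_count T i b = card {u\<in>T. u ! i = b}"

definition once_agreeing_pairs :: "nat \<Rightarrow> nat list set \<Rightarrow> (nat list \<times> nat list) set" where
  "once_agreeing_pairs n T = Sigma T (\<lambda>u. {v\<in>T. u \<noteq> v \<and> agreements n u v = 1})"

lemma agreements_eq_sum: "agreements n u v = (\<Sum>i<n. of_bool (u ! i = v ! i))"
proof -
  have "{i. i < n \<and> u ! i = v ! i} = {..<n} \<inter> {i. u ! i = v ! i}" by auto
  then show ?thesis by (simp add: agreements_def)
qed

lemma agreements_commute: "agreements n u v = agreements n v u"
  unfolding agreements_def by metis

lemma agreements_self: "agreements n u u = n"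
  by (simp add: agreements_def)

lemma hamming_eq_diff_agreements:
  assumes "length u = n"
  shows "hamming u v = n - agreements n u v"
proof -
  have "{i. i < length u \<and> u ! i \<noteq> v ! i} = {..<n} - {i. i < n \<and> u ! i = v ! i}"
    using assms by auto
  then have "hamming u v = card ({..<n} - {i. i < n \<and> u ! i = v ! i})"
    unfolding hamming_def by simp
  also have "\<dots> = n - agreements n u v"
    unfolding agreements_def by (subst card_Diff_subset) auto
  finally show ?thesis .
qed

lemma agreements_le_of_min_dist_ge:
  assumes "min_dist_ge C d" "C \<subseteq> words q n" "u \<in> C" "v \<in> C" "u \<noteq> v"
  shows "agreements n u v \<le> n - d"
proof -
  have "length u = n" using assms(2,3) by (auto simp: words_def)
  moreover have "d \<le> hamming u v" using assms(1,3-5) by (auto simp: min_dist_ge_def)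
  moreover have "agreements n u v \<le> n"
    unfolding agreements_def by (rule order_trans[OF card_mono[of "{..<n}"]]) auto
  ultimately show ?thesis by (simp add: hamming_eq_diff_agreements)
qed

lemma finite_words: "finite (words q n)"
proof -
  have "words q n \<subseteq> {xs. set xs \<subseteq> {..<q} \<and> length xs = n}"
    unfolding words_def by (auto simp: in_set_conv_nth)
  then show ?thesis by (rule finite_subset) (simp add: finite_lists_length_eq)
qed

lemma A_le:
  assumes "\<And>C. C \<subseteq> words q n \<Longrightarrow> min_dist_ge C d \<Longrightarrow> card C \<le> N"
  shows "A q n d \<le> N"
proof -
  let ?X = "{card C | C. C \<subseteq> words q n \<and> min_dist_ge C d}"
  have "?X \<subseteq> {..N}" using assms by auto
  then have "finite ?X" by (rule finite_subset) simp
  moreover have "card {} \<in> ?X"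
    by (rule CollectI, rule exI[of _ "{}"]) (simp add: min_dist_ge_def)
  ultimately show ?thesis
    unfolding A_def using assms by (subst Max_le_iff) auto
qed

lemma sum_over_symbols:
  fixes f :: "nat \<Rightarrow> 'a::comm_semiring_1"
  assumes "finite T" "\<forall>u\<in>T. u ! i < q"
  shows "(\<Sum>u\<in>T. f (u ! i)) = (\<Sum>b<q. of_nat (symbol_count T i b) * f b)"
proof -
  have "(\<lambda>u. u ! i) ` T \<subseteq> {..<q}" using assms(2) by auto
  then have "(\<Sum>u\<in>T. f (u ! i)) = (\<Sum>b<q. \<Sum>u\<in>{x\<in>T. x ! i = b}. f (u ! i))"
    using assms(1) sum.group[of T "{..<q}" "\<lambda>u. u ! i" "\<lambda>u. f (u ! i)"] by simp
  also have "\<dots> = (\<Sum>b<q. of_nat (symbol_count T i b) * f b)"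
    by (rule sum.cong) (simp_all add: symbol_count_def)
  finally show ?thesis .
qed

lemma nth_less_of_words: "T \<subseteq> words q n \<Longrightarrow> i < n \<Longrightarrow> \<forall>u\<in>T. u ! i < q"
  unfolding words_def by auto

lemma sum_symbol_count:
  assumes "finite T" "T \<subseteq> words q n" "i < n"
  shows "(\<Sum>b<q. symbol_count T i b) = card T"
  using sum_over_symbols[of T i q "\<lambda>_. 1::nat"] nth_less_of_words[OF assms(2,3)] assms(1)
  by simp

lemma sum_agreements_eq_sum_symbol_count:
  assumes "finite T"
  shows "(\<Sum>v\<in>T. agreements n u v) = (\<Sum>i<n. symbol_count T i (u ! i))"
proof -
  have "(\<Sum>v\<in>T. agreements n u v) = (\<Sum>i<n. \<Sum>v\<in>T. of_bool (v ! i = u ! i))"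
    by (simp add: agreements_eq_sum eq_commute sum.swap[of _ T])
  also have "\<dots> = (\<Sum>i<n. symbol_count T i (u ! i))"
    using assms by (intro sum.cong refl) (simp add: symbol_count_def Int_def)
  finally show ?thesis .
qed

lemma sum_sum_agreements:
  assumes "finite T" "T \<subseteq> words q n"
  shows "(\<Sum>u\<in>T. \<Sum>v\<in>T. agreements n u v) = (\<Sum>i<n. \<Sum>b<q. symbol_count T i b ^ 2)"
proof -
  have "(\<Sum>u\<in>T. \<Sum>v\<in>T. agreements n u v) = (\<Sum>i<n. \<Sum>u\<in>T. symbol_count T i (u ! i))"
    by (simp add: sum_agreements_eq_sum_symbol_count[OF assms(1)] sum.swap[of _ T])
  also have "\<dots> = (\<Sum>i<n. \<Sum>b<q. symbol_count T i b ^ 2)"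
    using sum_over_symbols[of T _ q "symbol_count T _"] nth_less_of_words[OF assms(2)] assms(1)
    by (intro sum.cong refl) (simp add: power2_eq_square)
  finally show ?thesis .
qed

lemma consecutive_product_nonneg: "0 \<le> ((x::int) - t) * (x - t - 1)"
  by (cases "x \<le> t") (auto intro: mult_nonpos_nonpos mult_nonneg_nonneg)

lemma sum_squares_shift:
  fixes f :: "'a \<Rightarrow> int"
  shows "(\<Sum>b\<in>I. f b ^ 2) = (\<Sum>b\<in>I. (f b - t) * (f b - t - 1))
           + (2 * t + 1) * (\<Sum>b\<in>I. f b) - int (card I) * t * (t + 1)"
proof -
  have "(\<Sum>b\<in>I. f b ^ 2) = (\<Sum>b\<in>I. (f b - t) * (f b - t - 1) + ((2 * t + 1) * f b - t * (t + 1)))"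
    by (intro sum.cong refl) (simp add: algebra_simps power2_eq_square)
  then show ?thesis
    by (simp add: sum.distrib sum_subtractf sum_distrib_left)
qed

lemma sum_mult_pred_le:
  fixes d :: "'a \<Rightarrow> int"
  assumes "finite I" "\<forall>b\<in>I. 0 \<le> d b"
  shows "(\<Sum>b\<in>I. d b * (d b - 1)) \<le> (\<Sum>b\<in>I. d b) * ((\<Sum>b\<in>I. d b) - 1)"
proof -
  let ?s = "\<Sum>b\<in>I. d b"
  have "d b \<le> ?s" if "b \<in> I" for b
    using assms that by (intro member_le_sum) auto
  then have "(\<Sum>b\<in>I. d b * d b) \<le> (\<Sum>b\<in>I. d b * ?s)"
    using assms(2) by (intro sum_mono mult_left_mono) auto
  then show ?thesis
    by (simp add: algebra_simps sum_subtractf sum_distrib_right)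
qed

locale two_agreement_code =
  fixes q n :: nat and C :: "nat list set"
  assumes code_subset_words: "C \<subseteq> words q n"
    and agreements_le_two: "\<lbrakk>u \<in> C; v \<in> C; u \<noteq> v\<rbrakk> \<Longrightarrow> agreements n u v \<le> 2"
begin

lemma finite_code: "finite C"
  using finite_subset[OF code_subset_words finite_words] .

definition fibre :: "nat \<Rightarrow> nat \<Rightarrow> nat list set" where
  "fibre j a = {u\<in>C. u ! j = a}"

lemma fibre_subset_code: "fibre j a \<subseteq> C"
  by (auto simp: fibre_def)

lemma finite_fibre: "finite (fibre j a)"
  using finite_subset[OF fibre_subset_code finite_code] .

lemma card_fibre: "card (fibre j a) = symbol_count C j a"
  by (simp add: fibre_def symbol_count_def)

lemma finite_once_agreeing_pairs: "T \<subseteq> C \<Longrightarrow> finite (once_agreeing_pairs n T)"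
  using finite_code by (auto simp: once_agreeing_pairs_def intro: finite_subset[of _ "C \<times> C"])

definition quadratic_excess :: "nat list set \<Rightarrow> nat \<Rightarrow> int \<Rightarrow> int" where
  "quadratic_excess T j t =
     (\<Sum>i\<in>{..<n}-{j}. \<Sum>b<q. (int (symbol_count T i b) - t) * (int (symbol_count T i b) - t - 1))"

lemma quadratic_excess_nonneg: "0 \<le> quadratic_excess T j t"
  unfolding quadratic_excess_def by (intro sum_nonneg consecutive_product_nonneg)

lemma sum_agreements_in_fibre:
  assumes "T \<subseteq> fibre j a" "j < n"
  shows "(\<Sum>u\<in>T. \<Sum>v\<in>T. agreements n u v) + card (once_agreeing_pairs n T) + 2 * card T
           = card T * (n + 2 * card T)"
proof -
  have fin: "finite T" using finite_subset[OF assms(1) finite_fibre] .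
  have pair: "agreements n u v + of_bool (u \<noteq> v \<and> agreements n u v = 1) = (if u = v then n else 2)"
    if "u \<in> T" "v \<in> T" for u v
  proof (cases "u = v")
    case True
    then show ?thesis by (simp add: agreements_self)
  next
    case False
    have "agreements n u v \<le> 2"
      using agreements_le_two False that assms(1) fibre_subset_code by blast
    moreover have "j \<in> {i. i < n \<and> u ! i = v ! i}"
      using assms that by (auto simp: fibre_def)
    then have "agreements n u v \<noteq> 0"
      unfolding agreements_def by (auto simp: card_eq_0_iff)
    ultimately show ?thesis using False by auto
  qed
  have row: "(\<Sum>v\<in>T. if u = v then n else 2) + 2 = n + 2 * card T" if "u \<in> T" for u
  proof -
    have "(\<Sum>v\<in>T. if u = v then n else 2) = n + (\<Sum>v\<in>T-{u}. if u = v then n else 2)"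
      using sum.remove[OF fin that, of "\<lambda>v. if u = v then n else 2"] by simp
    also have "(\<Sum>v\<in>T-{u}. if u = v then n else 2) = (\<Sum>v\<in>T-{u}. 2)"
      by (rule sum.cong) auto
    also have "\<dots> = 2 * (card T - 1)"
      using fin that by simp
    finally show ?thesis
      using fin that by (cases "card T") auto
  qed
  have "card (once_agreeing_pairs n T) = (\<Sum>u\<in>T. \<Sum>v\<in>T. of_bool (u \<noteq> v \<and> agreements n u v = 1))"
    using fin by (simp add: once_agreeing_pairs_def card_SigmaI Int_def)
  then have "(\<Sum>u\<in>T. \<Sum>v\<in>T. agreements n u v) + card (once_agreeing_pairs n T) + 2 * card T
      = (\<Sum>u\<in>T. (\<Sum>v\<in>T. agreements n u v + of_bool (u \<noteq> v \<and> agreements n u v = 1)) + 2)"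
    by (simp only: sum.distrib) simp
  also have "\<dots> = (\<Sum>u\<in>T. n + 2 * card T)"
    using pair row by (intro sum.cong refl) (simp cong: sum.cong)
  finally show ?thesis by simp
qed

lemma once_agreeing_pairs_identity:
  assumes "T \<subseteq> fibre j a" "j < n" "a < q"
  shows "int (card (once_agreeing_pairs n T)) + quadratic_excess T j t
           + (int n - 1) * ((2 * t + 1) * int (card T) - int q * t * (t + 1))
         = int (card T) ^ 2 + (int n - 2) * int (card T)"
proof -
  define m where "m = card T"
  have fin: "finite T" using finite_subset[OF assms(1) finite_fibre] .
  have words: "T \<subseteq> words q n" using assms(1) fibre_subset_code code_subset_words by blast
  have column_j: "(\<Sum>b<q. int (symbol_count T j b) ^ 2) = int m ^ 2"
  proof -
    have "{u\<in>T. u ! j = b} = (if b = a then T else {})" for b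
      using assms(1) by (auto simp: fibre_def)
    then have "symbol_count T j b = (if b = a then m else 0)" for b
      by (simp add: symbol_count_def m_def)
    then have "(\<Sum>b<q. int (symbol_count T j b) ^ 2) = (\<Sum>b<q. if b = a then int m ^ 2 else 0)"
      by (intro sum.cong) auto
    then show ?thesis using assms(3) by simp
  qed
  have column: "(\<Sum>b<q. int (symbol_count T i b) ^ 2)
      = (\<Sum>b<q. (int (symbol_count T i b) - t) * (int (symbol_count T i b) - t - 1))
        + ((2 * t + 1) * int m - int q * t * (t + 1))" if "i < n" for i
    using sum_squares_shift[of "\<lambda>b. int (symbol_count T i b)" "{..<q}" t]
      sum_symbol_count[OF fin words that]
    by (simp add: m_def flip: of_nat_sum)
  have "(\<Sum>i<n. \<Sum>b<q. int (symbol_count T i b) ^ 2)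
      = (\<Sum>b<q. int (symbol_count T j b) ^ 2) + (\<Sum>i\<in>{..<n}-{j}. \<Sum>b<q. int (symbol_count T i b) ^ 2)"
    using assms(2) by (subst sum.remove[of _ j]) auto
  also have "\<dots> = int m ^ 2 + quadratic_excess T j t
      + int (card ({..<n}-{j})) * ((2 * t + 1) * int m - int q * t * (t + 1))"
    unfolding column_j quadratic_excess_def using column by (simp add: sum.distrib)
  finally have squares: "(\<Sum>i<n. \<Sum>b<q. int (symbol_count T i b) ^ 2)
      = int m ^ 2 + quadratic_excess T j t + (int n - 1) * ((2 * t + 1) * int m - int q * t * (t + 1))"
    using assms(2) by (simp add: of_nat_diff)
  have "(\<Sum>i<n. \<Sum>b<q. int (symbol_count T i b) ^ 2) + int (card (once_agreeing_pairs n T)) + 2 * int m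
      = int m * (int n + 2 * int m)"
    using arg_cong[OF sum_agreements_in_fibre[OF assms(1,2)], of int] sum_sum_agreements[OF fin words]
    by (simp add: m_def of_nat_sum)
  then show ?thesis
    unfolding squares m_def[symmetric] by (simp add: algebra_simps power2_eq_square)
qed

lemma card_once_agreeing_pairs_le_sum_fibres:
  "card (once_agreeing_pairs n C) \<le> (\<Sum>i<n. \<Sum>b<q. card (once_agreeing_pairs n (fibre i b)))"
proof -
  have cover: "once_agreeing_pairs n C \<subseteq> (\<Union>i<n. \<Union>b<q. once_agreeing_pairs n (fibre i b))"
  proof
    fix p assume p: "p \<in> once_agreeing_pairs n C"
    then obtain u v where uv: "p = (u, v)" "u \<in> C" "v \<in> C" "u \<noteq> v" "agreements n u v = 1"
      by (auto simp: once_agreeing_pairs_def)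
    then have "{i. i < n \<and> u ! i = v ! i} \<noteq> {}"
      unfolding agreements_def by fastforce
    then obtain i where i: "i < n" "u ! i = v ! i" by auto
    have "u ! i < q" using uv(2) i(1) code_subset_words by (auto simp: words_def)
    moreover have "p \<in> once_agreeing_pairs n (fibre i (u ! i))"
      using uv i by (auto simp: once_agreeing_pairs_def fibre_def)
    ultimately show "p \<in> (\<Union>i<n. \<Union>b<q. once_agreeing_pairs n (fibre i b))"
      using i(1) by blast
  qed
  have "card (once_agreeing_pairs n C) \<le> (\<Sum>i<n. card (\<Union>b<q. once_agreeing_pairs n (fibre i b)))"
    using finite_once_agreeing_pairs[OF fibre_subset_code]
    by (intro order_trans[OF card_mono[OF _ cover] card_UN_le]) auto
  also have "\<dots> \<le> (\<Sum>i<n. \<Sum>b<q. card (once_agreeing_pairs n (fibre i b)))"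
    by (intro sum_mono card_UN_le) auto
  finally show ?thesis .
qed

end

locale q_plus_three_code = two_agreement_code q "q + 3" C for q C +
  fixes k :: nat
  assumes q_eq: "q + 1 = 2 * k"
begin

lemma int_q_eq: "int q = 2 * int k - 1"
  using q_eq by simp

lemma once_agreeing_pairs_identity_q_plus_three:
  assumes "T \<subseteq> fibre j a" "j < q + 3" "a < q"
  shows "int (card (once_agreeing_pairs (q + 3) T)) + quadratic_excess T j t
       = int (card T) ^ 2 + (int q + 1) * int (card T)
         - (int q + 2) * ((2 * t + 1) * int (card T) - int q * t * (t + 1))"
  using once_agreeing_pairs_identity[OF assms, of t] by (simp add: algebra_simps)

lemma symbol_count_le:
  assumes "j < q + 3" "a < q"
  shows "symbol_count C j a \<le> q * k"
proof (rule ccontr)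
  assume "\<not> ?thesis"
  then obtain T where T: "T \<subseteq> fibre j a" "card T = q * k + 1"
    using obtain_subset_with_card_n[of "q * k + 1" "fibre j a"] by (auto simp: card_fibre)
  have "int (card (once_agreeing_pairs (q + 3) T)) + quadratic_excess T j (int k) = - 4 * int k"
    using once_agreeing_pairs_identity_q_plus_three[OF T(1) assms, of "int k"] T(2) int_q_eq
    by (simp add: algebra_simps power2_eq_square)
  then show False
    using quadratic_excess_nonneg[of T j "int k"] q_eq by linarith
qed

lemma card_once_agreeing_pairs_fibre_le:
  assumes "j < q + 3" "a < q"
  shows "int (card (once_agreeing_pairs (q + 3) (fibre j a)))
           \<le> (int (q * k) - int (symbol_count C j a)) * (int (q * k) - int (symbol_count C j a) - 1)"
proof -
  have "int (card (once_agreeing_pairs (q + 3) (fibre j a))) + quadratic_excess (fibre j a) j (int k - 1)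
      = (int (q * k) - int (symbol_count C j a)) * (int (q * k) - int (symbol_count C j a) - 1)"
    using once_agreeing_pairs_identity_q_plus_three[OF subset_refl assms, of "int k - 1"]
    unfolding card_fibre of_nat_mult int_q_eq by (simp add: algebra_simps power2_eq_square)
  then show ?thesis
    using quadratic_excess_nonneg[of "fibre j a" j "int k - 1"] by linarith
qed

lemma symbol_count_in_full_fibre:
  assumes "j < q + 3" "a < q" "symbol_count C j a = q * k" "i < q + 3" "i \<noteq> j" "b < q"
  shows "symbol_count (fibre j a) i b = k"
proof -
  let ?c = "\<lambda>b. symbol_count (fibre j a) i b"
  have "int (card (once_agreeing_pairs (q + 3) (fibre j a))) + quadratic_excess (fibre j a) j (int k) = 0"
    using once_agreeing_pairs_identity_q_plus_three[OF subset_refl assms(1,2), of "int k"] assms(3) int_q_eq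
    by (simp add: card_fibre algebra_simps power2_eq_square)
  then have "quadratic_excess (fibre j a) j (int k) = 0"
    using quadratic_excess_nonneg[of "fibre j a" j "int k"] by linarith
  then have "(\<Sum>b<q. (int (?c b) - int k) * (int (?c b) - int k - 1)) = 0"
    unfolding quadratic_excess_def using assms(4,5)
    by (subst (asm) sum_nonneg_eq_0_iff) (auto intro!: sum_nonneg consecutive_product_nonneg)
  then have at_least: "k \<le> ?c b'" if "b' < q" for b'
    using that by (subst (asm) sum_nonneg_eq_0_iff) (auto intro: consecutive_product_nonneg)
  have "(\<Sum>b'<q. ?c b' - k) = (\<Sum>b'<q. ?c b') - (\<Sum>b'<q. k)"
    using at_least by (intro sum_subtractf_nat) auto
  also have "\<dots> = 0"
    using sum_symbol_count[OF finite_fibre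
        order_trans[OF fibre_subset_code code_subset_words] assms(4)] assms(3)
    by (simp add: card_fibre)
  finally have "?c b \<le> k"
    using assms(6) by (simp add: sum_eq_0_iff)
  then show ?thesis
    using at_least[OF assms(6)] by simp
qed

lemma ex_once_agreeing_in_full_fibre:
  assumes "odd k" "j < q + 3" "a < q" "symbol_count C j a = q * k" "c \<in> C" "c \<notin> fibre j a"
  shows "\<exists>s\<in>fibre j a. agreements (q + 3) c s = 1"
proof (rule ccontr)
  assume none: "\<not> ?thesis"
  let ?F = "fibre j a"
  have c_less: "c ! i < q" if "i < q + 3" for i
    using assms(5) that code_subset_words by (auto simp: words_def)
  have "symbol_count ?F j (c ! j) = 0"
    using assms(5,6) by (auto simp: symbol_count_def fibre_def card_eq_0_iff)
  then have "(\<Sum>s\<in>?F. agreements (q + 3) c s) = (\<Sum>i\<in>{..<q + 3}-{j}. symbol_count ?F i (c ! i))"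
    using assms(2) by (simp add: sum_agreements_eq_sum_symbol_count[OF finite_fibre] sum.remove[of _ j])
  also have "\<dots> = (\<Sum>i\<in>{..<q + 3}-{j}. k)"
    using symbol_count_in_full_fibre[OF assms(2-4)] c_less by (intro sum.cong) auto
  finally have "(\<Sum>s\<in>?F. agreements (q + 3) c s) = (q + 2) * k"
    using assms(2) by simp
  moreover have "odd ((q + 2) * k)"
    using assms(1) q_eq by auto
  moreover have "even (\<Sum>s\<in>?F. agreements (q + 3) c s)"
  proof (rule dvd_sum)
    fix s assume s: "s \<in> ?F"
    have "agreements (q + 3) c s \<le> 2"
      using agreements_le_two assms(5,6) s fibre_subset_code by blast
    moreover have "agreements (q + 3) c s \<noteq> 1"
      using none s by blast
    ultimately have "agreements (q + 3) c s \<in> {0, 2}"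
      by auto
    then show "even (agreements (q + 3) c s)"
      by auto
  qed
  ultimately show False by (simp only:)
qed

lemma card_code_le_column_count: "card C \<le> q * (q * k)"
proof -
  have "card C = (\<Sum>b<q. symbol_count C 0 b)"
    using sum_symbol_count[OF finite_code code_subset_words, of 0] by simp
  also have "\<dots> \<le> (\<Sum>b<q. q * k)"
    using symbol_count_le by (intro sum_mono) auto
  finally show ?thesis by simp
qed

lemma sum_symbol_deficits:
  assumes "i < q + 3"
  shows "(\<Sum>b<q. q * k - symbol_count C i b) = q * (q * k) - card C"
  using sum_subtractf_nat[of "{..<q}" "symbol_count C i" "\<lambda>_. q * k"] symbol_count_le assms
    sum_symbol_count[OF finite_code code_subset_words assms]
  by simp

lemma ex_full_fibre:
  assumes "j < q + 3" "q * (q * k) - card C < q"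
  obtains a where "a < q" "symbol_count C j a = q * k"
proof -
  have "\<exists>a<q. symbol_count C j a = q * k"
  proof (rule ccontr)
    assume "\<not> ?thesis"
    then have "1 \<le> q * k - symbol_count C j b" if "b < q" for b
      using that symbol_count_le[OF assms(1) that] by fastforce
    then have "(\<Sum>b<q. 1) \<le> (\<Sum>b<q. q * k - symbol_count C j b)"
      by (intro sum_mono) auto
    then show False
      using assms sum_symbol_deficits[OF assms(1)] by simp
  qed
  then show ?thesis using that by blast
qed

lemma card_once_agreeing_pairs_ge:
  assumes "odd k" "j < q + 3" "a < q" "symbol_count C j a = q * k"
  shows "2 * (card C - q * k) \<le> card (once_agreeing_pairs (q + 3) C)"
proof -
  let ?D = "C - fibre j a"
  have "\<forall>c\<in>?D. \<exists>s. s \<in> fibre j a \<and> agreements (q + 3) c s = 1"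
    using ex_once_agreeing_in_full_fibre[OF assms] by blast
  then obtain partner
    where partner: "\<And>c. c \<in> ?D \<Longrightarrow> partner c \<in> fibre j a \<and> agreements (q + 3) c (partner c) = 1"
    by (metis bchoice)
  let ?P = "(\<lambda>c. (c, partner c)) ` ?D \<union> (\<lambda>c. (partner c, c)) ` ?D"
  have "card ?P \<le> card (once_agreeing_pairs (q + 3) C)"
  proof (rule card_mono[OF finite_once_agreeing_pairs[OF subset_refl]])
    have "(c, partner c) \<in> once_agreeing_pairs (q + 3) C \<and> (partner c, c) \<in> once_agreeing_pairs (q + 3) C"
      if "c \<in> ?D" for c
    proof -
      have "partner c \<in> C" "c \<in> C" "c \<noteq> partner c"
        using partner[OF that] that fibre_subset_code by auto
      then show ?thesis
        using partner[OF that] agreements_commute[of "q + 3" c "partner c"]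
        by (simp add: once_agreeing_pairs_def)
    qed
    then show "?P \<subseteq> once_agreeing_pairs (q + 3) C" by blast
  qed
  moreover have "card ?P = 2 * card ?D"
  proof -
    have "(\<lambda>c. (c, partner c)) ` ?D \<inter> (\<lambda>c. (partner c, c)) ` ?D = {}"
      using partner by auto
    then show ?thesis
      using finite_code by (subst card_Un_disjoint) (auto simp: card_image inj_on_def)
  qed
  moreover have "card ?D = card C - q * k"
    using card_Diff_subset[OF finite_fibre fibre_subset_code]
    by (simp add: card_fibre assms(4))
  ultimately show ?thesis by simp
qed

lemma column_once_agreeing_pairs_le:
  assumes "i < q + 3"
  shows "(\<Sum>b<q. int (card (once_agreeing_pairs (q + 3) (fibre i b))))
           \<le> int (q * (q * k) - card C) * (int (q * (q * k) - card C) - 1)"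
proof -
  define d where "d b = int (q * k - symbol_count C i b)" for b
  have "(\<Sum>b<q. int (card (once_agreeing_pairs (q + 3) (fibre i b)))) \<le> (\<Sum>b<q. d b * (d b - 1))"
    using card_once_agreeing_pairs_fibre_le[OF assms] symbol_count_le[OF assms]
    by (intro sum_mono) (simp add: d_def of_nat_diff)
  also have "\<dots> \<le> (\<Sum>b<q. d b) * ((\<Sum>b<q. d b) - 1)"
    by (intro sum_mult_pred_le) (auto simp: d_def)
  also have "(\<Sum>b<q. d b) = int (q * (q * k) - card C)"
    using sum_symbol_deficits[OF assms] by (simp add: d_def flip: of_nat_sum)
  finally show ?thesis .
qed

lemma card_code_le:
  assumes "odd k" "3 \<le> k"
  shows "card C \<le> q * q * k - q"
proof (rule ccontr)
  assume large: "\<not> card C \<le> q * q * k - q"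
  define s where "s = q * (q * k) - card C"
  have q_ge: "5 \<le> q"
    using q_eq assms(2) by linarith
  then have "1 \<le> q * k"
    using assms(2) by simp
  then have "q \<le> q * (q * k)"
    using mult_le_mono2[of 1 "q * k" q] by simp
  then have s_less: "s < q"
    using large q_ge unfolding s_def mult.assoc by arith
  obtain a where a: "a < q" "symbol_count C 0 a = q * k"
    using ex_full_fibre[of 0] s_less by (auto simp: s_def)
  have "2 * (card C - q * k) \<le> card (once_agreeing_pairs (q + 3) C)"
    using card_once_agreeing_pairs_ge[OF assms(1) _ a] by simp
  also have "\<dots> \<le> (\<Sum>i<q + 3. \<Sum>b<q. card (once_agreeing_pairs (q + 3) (fibre i b)))"
    by (rule card_once_agreeing_pairs_le_sum_fibres)
  finally have "int (2 * (card C - q * k)) \<le> (\<Sum>i<q + 3. \<Sum>b<q. int (card (once_agreeing_pairs (q + 3) (fibre i b))))"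
    by (simp flip: of_nat_sum)
  also have "\<dots> \<le> (\<Sum>i<q + 3. int s * (int s - 1))"
    using column_once_agreeing_pairs_le by (intro sum_mono) (simp add: s_def)
  also have "\<dots> \<le> (int q + 3) * ((int q - 1) * (int q - 2))"
  proof -
    have "int s * (int s - 1) \<le> (int q - 1) * (int q - 2)"
      using s_less q_ge by (cases "s = 0") (auto intro: mult_mono)
    then show ?thesis by simp
  qed
  finally have pairs: "2 * (int (card C) - int q * int k) \<le> (int q + 3) * ((int q - 1) * (int q - 2))"
    using card_fibre[of 0 a] card_mono[OF finite_code fibre_subset_code, of 0 a] a(2)
    by (simp add: of_nat_diff)
  have "int (card C) = int q * int q * int k - int s"
    using card_code_le_column_count by (simp add: s_def of_nat_diff)
  moreover have "2 * (int q * int q * int k - int q * int k - (int q - 1))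
      - (int q + 3) * ((int q - 1) * (int q - 2)) = 4 * (int q - 1)"
    unfolding int_q_eq by (simp add: algebra_simps)
  moreover have "int s \<le> int q - 1" "(5::int) \<le> int q"
    using s_less q_ge by simp_all
  ultimately show False
    using pairs by (smt (verit))
qed

end

theorem corollary5p4:
  fixes q :: nat
  assumes "q mod 4 = 1" and "q \<noteq> 1"
  shows "real (A q (q + 3) (q + 1)) \<le> (1/2) * real q ^ 2 * (real q + 1) - real q"
proof -
  define k where "k = 2 * (q div 4) + 1"
  have k: "q + 1 = 2 * k" "odd k" "3 \<le> k"
    using assms unfolding k_def by presburger+
  have "A q (q + 3) (q + 1) \<le> q * q * k - q"
  proof (rule A_le)
    fix C assume C: "C \<subseteq> words q (q + 3)" "min_dist_ge C (q + 1)"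
    have "agreements (q + 3) u v \<le> 2" if "u \<in> C" "v \<in> C" "u \<noteq> v" for u v
      using agreements_le_of_min_dist_ge[OF C(2,1) that] by simp
    then interpret q_plus_three_code q C k
      using C(1) k(1) by unfold_locales
    show "card C \<le> q * q * k - q"
      by (rule card_code_le[OF k(2,3)])
  qed
  moreover have "real (q * q * k - q) = (1/2) * real q ^ 2 * (real q + 1) - real q"
    using k by (simp add: of_nat_diff power2_eq_square)
  ultimately show ?thesis
    by (metis of_nat_le_iff)
qed

end
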